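(* Let $k\geq 3$ be an odd integer and let $n\geq 2$. Then the integer $k$-matching preclusion number of the complete graph $K_n$ is $$mp^{k}(K_n)=\begin{cases} n-2, & n\in\{3,5\},\\ n-1, & \text{otherwise}.\end{cases}$$
   Context: All graphs are finite, simple and undirected; $\Gamma(v)$ is the set of edges incident with $v$. For a positive integer $k$, an integer $k$-matching of $G$ is a function $h:E(G)\to\{0,1,\dots,k\}$ with $\sum_{e\in\Gamma(v)}h(e)\leq k$ for all $v\in V(G)$. It is perfect if $\sum_{e\in\Gamma(v)}h(e)=k$ for every vertex $v$, and almost perfect if there is exactly one vertex $v'$ with $\sum_{e\in\Gamma(v')}h(e)=k-1$ and $\sum_{e\in\Gamma(v)}h(e)=k$ for all other vertices $v$. An edge set $F\subseteq E(G)$ is an integer $k$-matching preclusion set if $G-F$ has neither a perfect integer $k$-matching nor an almost perfect integer $k$-matching; $mp^{k}(G)$ is the minimum size of such a set. *)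

theory Defs
  imports Main
begin

text \<open>A finite simple graph is given by a vertex set V and an edge set E of
two-element subsets of V. Edge functions are functions on sets of vertices;
only their values on edges matter.\<close>

definition simple_graph :: "'a set \<Rightarrow> 'a set set \<Rightarrow> bool" where
  "simple_graph V E \<longleftrightarrow> finite V \<and> (\<forall>e\<in>E. \<exists>u v. u \<in> V \<and> v \<in> V \<and> u \<noteq> v \<and> e = {u, v})"

definition incident :: "'a set set \<Rightarrow> 'a \<Rightarrow> 'a set set" where
  "incident E v = {e \<in> E. v \<in> e}"

definition int_matching :: "nat \<Rightarrow> 'a set \<Rightarrow> 'a set set \<Rightarrow> ('a set \<Rightarrow> nat) \<Rightarrow> bool" where
  "int_matching k V E h \<longleftrightarrow> (\<forall>e\<in>E. h e \<le> k) \<and> (\<forall>v\<in>V. (\<Sum>e\<in>incident E v. h e) \<le> k)"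

definition perfect_int_matching :: "nat \<Rightarrow> 'a set \<Rightarrow> 'a set set \<Rightarrow> ('a set \<Rightarrow> nat) \<Rightarrow> bool" where
  "perfect_int_matching k V E h \<longleftrightarrow> int_matching k V E h \<and> (\<forall>v\<in>V. (\<Sum>e\<in>incident E v. h e) = k)"

definition almost_perfect_int_matching :: "nat \<Rightarrow> 'a set \<Rightarrow> 'a set set \<Rightarrow> ('a set \<Rightarrow> nat) \<Rightarrow> bool" where
  "almost_perfect_int_matching k V E h \<longleftrightarrow> int_matching k V E h \<and>
     (\<exists>!v'. v' \<in> V \<and> (\<Sum>e\<in>incident E v'. h e) = k - 1) \<and>
     (\<forall>v\<in>V. (\<Sum>e\<in>incident E v. h e) = k \<or> (\<Sum>e\<in>incident E v. h e) = k - 1)"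

definition int_matching_preclusion_set :: "nat \<Rightarrow> 'a set \<Rightarrow> 'a set set \<Rightarrow> 'a set set \<Rightarrow> bool" where
  "int_matching_preclusion_set k V E F \<longleftrightarrow> F \<subseteq> E \<and>
     \<not> (\<exists>h. perfect_int_matching k V (E - F) h) \<and>
     \<not> (\<exists>h. almost_perfect_int_matching k V (E - F) h)"

definition mp :: "nat \<Rightarrow> 'a set \<Rightarrow> 'a set set \<Rightarrow> nat" where
  "mp k V E = (LEAST m. \<exists>F. int_matching_preclusion_set k V E F \<and> card F = m)"

definition complete_edges :: "'a set \<Rightarrow> 'a set set" where
  "complete_edges V = {e. \<exists>u v. u \<in> V \<and> v \<in> V \<and> u \<noteq> v \<and> e = {u, v}}"

end

theory Submission
  imports Defs
begin

text \<open>If F deletes at most n - 2 edges of K_n (at most n - 3 when n = 3, 5), then K_n - F contains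
  a perfect matching when n is even, and a triangle abc together with a perfect matching of the
  other vertices when n is odd. Weight k on the matching edges and weights (k-1)/2, (k-1)/2,
  (k+1)/2 on ab, ac, bc give a perfect, respectively almost perfect, integer k-matching. Both
  structures are built by repeatedly deleting the ends of a non-edge of F that covers at least
  two edges of F (three, in the tight case n \<ge> 7 odd with |F| = n - 2).

  Conversely, deleting the n - 1 edges at a vertex isolates it, and for n = 3, 5 deleting all
  edges inside a set S of (n+1)/2 vertices leaves S independent with only |S| - 1 neighbours;
  then the vertices of S need total weight at least |S| k - 1, which their neighbours cannot
  supply.\<close>

abbreviation weighted_degree :: "'a set set \<Rightarrow> ('a set \<Rightarrow> nat) \<Rightarrow> 'a \<Rightarrow> nat" where
  "weighted_degree E h v \<equiv> \<Sum>e\<in>incident E v. h e"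

lemma complete_edges_eq: "complete_edges V = {e. e \<subseteq> V \<and> card e = 2}"
  by (auto simp: complete_edges_def card_2_iff)

lemma card_complete_edges: "finite V \<Longrightarrow> card (complete_edges V) = card V choose 2"
  by (simp add: complete_edges_eq n_subsets)

lemma complete_edges_subset_Pow: "complete_edges V \<subseteq> Pow V"
  by (auto simp: complete_edges_def)

lemma finite_complete_edges: "finite V \<Longrightarrow> finite (complete_edges V)"
  using complete_edges_subset_Pow by (rule finite_subset) simp

lemma complete_edges_mono: "V \<subseteq> W \<Longrightarrow> complete_edges V \<subseteq> complete_edges W"
  by (auto simp: complete_edges_def)

lemma doubleton_in_complete_edges: "u \<in> V \<Longrightarrow> v \<in> V \<Longrightarrow> u \<noteq> v \<Longrightarrow> {u, v} \<in> complete_edges V"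
  by (auto simp: complete_edges_def)

lemma complete_edge_containing:
  assumes "e \<in> complete_edges W" "x \<in> e"
  obtains y where "e = {x, y}" "y \<noteq> x" "x \<in> W" "y \<in> W"
  using assms by (auto simp: complete_edges_def)

lemma card_of_complete_edge: "e \<in> complete_edges V \<Longrightarrow> card e = 2"
  by (auto simp: complete_edges_def)

lemma simple_graph_complete_edges: "finite V \<Longrightarrow> simple_graph V (complete_edges V)"
  by (auto simp: simple_graph_def complete_edges_def)

lemma simple_graph_complete_edges_Diff: "finite V \<Longrightarrow> simple_graph V (complete_edges V - F)"
  by (auto simp: simple_graph_def complete_edges_def)

lemma finite_edges:
  assumes "simple_graph V E"
  shows "finite E"
proof (rule finite_subset)
  show "E \<subseteq> Pow V"
    using assms by (force simp: simple_graph_def)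
  show "finite (Pow V)"
    using assms by (simp add: simple_graph_def)
qed

lemma finite_incident: "simple_graph V E \<Longrightarrow> finite (incident E v)"
  by (simp add: incident_def finite_edges)

lemma incident_empty [simp]: "incident {} v = {}"
  by (simp add: incident_def)

lemma incident_insert [simp]:
  "incident (insert e E) v = (if v \<in> e then insert e (incident E v) else incident E v)"
  by (auto simp: incident_def)

lemma int_matching_if_weighted_degree_le:
  assumes G: "simple_graph V E" and deg: "\<forall>v\<in>V. weighted_degree E h v \<le> k"
  shows "int_matching k V E h"
proof -
  have "h e \<le> k" if "e \<in> E" for e
  proof -
    obtain u v where "u \<in> V" "e = {u, v}"
      using G \<open>e \<in> E\<close> by (auto simp: simple_graph_def)
    then have "h e \<le> weighted_degree E h u"
      using \<open>e \<in> E\<close> by (intro member_le_sum finite_incident[OF G]) (auto simp: incident_def)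
    with deg \<open>u \<in> V\<close> show ?thesis by force
  qed
  with deg show ?thesis by (simp add: int_matching_def)
qed

lemma perfect_int_matchingI:
  "simple_graph V E \<Longrightarrow> \<forall>v\<in>V. weighted_degree E h v = k \<Longrightarrow> perfect_int_matching k V E h"
  by (simp add: perfect_int_matching_def int_matching_if_weighted_degree_le)

lemma almost_perfect_int_matchingI:
  assumes "simple_graph V E" "a \<in> V" "1 \<le> k" "weighted_degree E h a = k - 1"
    "\<forall>v\<in>V - {a}. weighted_degree E h v = k"
  shows "almost_perfect_int_matching k V E h"
proof -
  have "\<exists>!v. v \<in> V \<and> weighted_degree E h v = k - 1"
  proof (rule ex1I[of _ a])
    fix v assume "v \<in> V \<and> weighted_degree E h v = k - 1"
    with assms(3,5) show "v = a" by force
  qed (use assms(2,4) in simp)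
  moreover have "\<forall>v\<in>V. weighted_degree E h v \<le> k"
    using assms(4,5) by force
  moreover have "\<forall>v\<in>V. weighted_degree E h v = k \<or> weighted_degree E h v = k - 1"
    using assms(4,5) by blast
  ultimately show ?thesis
    using int_matching_if_weighted_degree_le[OF assms(1)]
    unfolding almost_perfect_int_matching_def by blast
qed

lemma weighted_degree_indicator:
  assumes "P \<subseteq> E" "finite E"
  shows "weighted_degree E (\<lambda>e. if e \<in> P then m else 0) v = m * card (incident P v)"
proof -
  have "incident E v \<inter> {e. e \<in> P} = incident P v"
    using assms(1) by (auto simp: incident_def)
  with assms(2) show ?thesis
    by (simp add: sum.If_cases incident_def)
qed

section \<open>Deficient independent sets preclude integer matchings\<close>

lemma weighted_degree_ge_if_perfect_or_almost_perfect:
  assumes "perfect_int_matching k V E h \<or> almost_perfect_int_matching k V E h" "v \<in> V"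
  shows "k \<le> weighted_degree E h v + 1"
  using assms unfolding perfect_int_matching_def almost_perfect_int_matching_def by fastforce

lemma weighted_degree_le_if_perfect_or_almost_perfect:
  assumes "perfect_int_matching k V E h \<or> almost_perfect_int_matching k V E h" "v \<in> V"
  shows "weighted_degree E h v \<le> k"
  using assms unfolding perfect_int_matching_def almost_perfect_int_matching_def int_matching_def
  by blast

lemma deficient_vertex_unique:
  assumes "perfect_int_matching k V E h \<or> almost_perfect_int_matching k V E h"
    and "x \<in> V" "y \<in> V" "weighted_degree E h x < k" "weighted_degree E h y < k"
  shows "x = y"
  using assms(1)
proof
  assume "perfect_int_matching k V E h"
  then show "x = y"
    using assms(2,4) by (simp add: perfect_int_matching_def)
next
  assume almost: "almost_perfect_int_matching k V E h"
  then have "weighted_degree E h x = k - 1" "weighted_degree E h y = k - 1"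
    using assms(2-5) unfolding almost_perfect_int_matching_def by fastforce+
  with almost assms(2,3) show "x = y"
    unfolding almost_perfect_int_matching_def by blast
qed

text \<open>At most one vertex has a deficit, and that deficit is 1.\<close>
lemma card_mult_le_sum_weighted_degree:
  assumes match: "perfect_int_matching k V E h \<or> almost_perfect_int_matching k V E h"
    and "S \<subseteq> V" "finite S"
  shows "card S * k \<le> (\<Sum>s\<in>S. weighted_degree E h s) + 1"
proof (cases "\<exists>s\<in>S. weighted_degree E h s < k")
  case True
  then obtain s0 where s0: "s0 \<in> S" "weighted_degree E h s0 < k" by blast
  have "k \<le> weighted_degree E h s + (if s = s0 then 1 else 0)" if "s \<in> S" for s
  proof (cases "s = s0")
    case False
    then show ?thesis
      using deficient_vertex_unique[OF match, of s s0] s0 that \<open>S \<subseteq> V\<close> by force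
  qed (use weighted_degree_ge_if_perfect_or_almost_perfect[OF match] that \<open>S \<subseteq> V\<close> in auto)
  then have "(\<Sum>s\<in>S. k) \<le> (\<Sum>s\<in>S. weighted_degree E h s + (if s = s0 then 1 else 0))"
    by (rule sum_mono)
  with s0(1) \<open>finite S\<close> show ?thesis
    by (simp add: sum.distrib)
next
  case False
  then have "(\<Sum>s\<in>S. k) \<le> (\<Sum>s\<in>S. weighted_degree E h s)"
    by (intro sum_mono) (simp add: not_less)
  then show ?thesis by simp
qed

lemma sum_UN_le:
  fixes f :: "'a \<Rightarrow> nat"
  assumes "finite I" "\<And>i. i \<in> I \<Longrightarrow> finite (A i)"
  shows "sum f (\<Union>i\<in>I. A i) \<le> (\<Sum>i\<in>I. sum f (A i))"
  using assms
proof (induction I rule: finite_induct)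
  case (insert i I)
  have fin: "finite (\<Union>j\<in>I. A j)" "finite (A i)"
    using insert.hyps(1) insert.prems by auto
  have "sum f (A i \<union> (\<Union>j\<in>I. A j)) \<le> sum f (A i) + sum f (\<Union>j\<in>I. A j)"
    unfolding sum_Un_nat[OF fin(2,1)] by (rule diff_le_self)
  also have "\<dots> \<le> sum f (A i) + (\<Sum>j\<in>I. sum f (A j))"
    using insert.IH insert.prems by simp
  also have "\<dots> = (\<Sum>j\<in>insert i I. sum f (A j))"
    using insert.hyps by simp
  finally show ?case by simp
qed simp

lemma sum_weighted_degree_le_if_neighbours_in:
  assumes G: "simple_graph V E" and "S \<subseteq> V" "finite T" "S \<inter> T = {}"
    and nbrs: "\<And>e s. e \<in> E \<Longrightarrow> s \<in> S \<Longrightarrow> s \<in> e \<Longrightarrow> e - {s} \<subseteq> T"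
  shows "(\<Sum>s\<in>S. weighted_degree E h s) \<le> (\<Sum>t\<in>T. weighted_degree E h t)"
proof -
  have "finite S"
    using G \<open>S \<subseteq> V\<close> finite_subset by (auto simp: simple_graph_def)
  have disj: "\<forall>s\<in>S. \<forall>s'\<in>S. s \<noteq> s' \<longrightarrow> incident E s \<inter> incident E s' = {}"
    using nbrs \<open>S \<inter> T = {}\<close> by (fastforce simp: incident_def)
  have "(\<Union>s\<in>S. incident E s) \<subseteq> (\<Union>t\<in>T. incident E t)"
  proof
    fix e assume "e \<in> (\<Union>s\<in>S. incident E s)"
    then obtain s where s: "s \<in> S" "e \<in> E" "s \<in> e"
      by (auto simp: incident_def)
    obtain u v where "u \<noteq> v" "e = {u, v}"
      using G \<open>e \<in> E\<close> by (auto simp: simple_graph_def)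
    then obtain t where "t \<in> e" "t \<noteq> s" by blast
    with nbrs[OF s(2,1,3)] s(2) show "e \<in> (\<Union>t\<in>T. incident E t)"
      by (auto simp: incident_def)
  qed
  then have "sum h (\<Union>s\<in>S. incident E s) \<le> sum h (\<Union>t\<in>T. incident E t)"
    using \<open>finite T\<close> finite_incident[OF G] by (intro sum_mono2) auto
  moreover have "(\<Sum>s\<in>S. weighted_degree E h s) = sum h (\<Union>s\<in>S. incident E s)"
    using sum.UNION_disjoint[OF \<open>finite S\<close> _ disj, of h] finite_incident[OF G] by simp
  moreover have "sum h (\<Union>t\<in>T. incident E t) \<le> (\<Sum>t\<in>T. weighted_degree E h t)"
    using \<open>finite T\<close> finite_incident[OF G] by (rule sum_UN_le)
  ultimately show ?thesis by linarith
qed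

lemma int_matching_preclusion_set_if_deficient:
  assumes G: "simple_graph V E" and "F \<subseteq> E" "S \<subseteq> V" "T \<subseteq> V" "S \<inter> T = {}"
    and "card T < card S" "2 \<le> k"
    and nbrs: "\<And>e s. e \<in> E - F \<Longrightarrow> s \<in> S \<Longrightarrow> s \<in> e \<Longrightarrow> e - {s} \<subseteq> T"
  shows "int_matching_preclusion_set k V E F"
proof -
  have G': "simple_graph V (E - F)"
    using G by (auto simp: simple_graph_def)
  have "finite S" "finite T"
    using G \<open>S \<subseteq> V\<close> \<open>T \<subseteq> V\<close> finite_subset by (auto simp: simple_graph_def)
  have "\<not> (perfect_int_matching k V (E - F) h \<or> almost_perfect_int_matching k V (E - F) h)" for h
  proof
    assume match: "perfect_int_matching k V (E - F) h \<or> almost_perfect_int_matching k V (E - F) h"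
    have "(card T + 1) * k \<le> card S * k"
      using \<open>card T < card S\<close> by (intro mult_le_mono1) simp
    also have "\<dots> \<le> (\<Sum>s\<in>S. weighted_degree (E - F) h s) + 1"
      using card_mult_le_sum_weighted_degree[OF match \<open>S \<subseteq> V\<close> \<open>finite S\<close>] .
    also have "\<dots> \<le> (\<Sum>t\<in>T. weighted_degree (E - F) h t) + 1"
      using sum_weighted_degree_le_if_neighbours_in[OF G' \<open>S \<subseteq> V\<close> \<open>finite T\<close> \<open>S \<inter> T = {}\<close> nbrs]
      by simp
    also have "\<dots> \<le> card T * k + 1"
      using sum_mono[of T "weighted_degree (E - F) h" "\<lambda>_. k"] \<open>T \<subseteq> V\<close>
        weighted_degree_le_if_perfect_or_almost_perfect[OF match] by force
    finally show False
      using \<open>2 \<le> k\<close> by (simp add: algebra_simps)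
  qed
  with \<open>F \<subseteq> E\<close> show ?thesis
    by (simp add: int_matching_preclusion_set_def)
qed

lemma card_star_edges:
  assumes "finite V" "x \<in> V"
  shows "card {e \<in> complete_edges V. x \<in> e} = card V - 1"
proof -
  have "{e \<in> complete_edges V. x \<in> e} = (\<lambda>y. {x, y}) ` (V - {x})"
    using assms(2) by (auto simp: complete_edges_def)
  moreover have "inj_on (\<lambda>y. {x, y}) (V - {x})"
    by (auto simp: inj_on_def doubleton_eq_iff)
  ultimately show ?thesis
    using assms by (simp add: card_image)
qed

lemma int_matching_preclusion_set_star_edges:
  assumes "finite V" "x \<in> V" "2 \<le> k"
  shows "int_matching_preclusion_set k V (complete_edges V) {e \<in> complete_edges V. x \<in> e}"
  using assms
  by (intro int_matching_preclusion_set_if_deficient[where S = "{x}" and T = "{}"])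
    (auto simp: simple_graph_complete_edges)

lemma int_matching_preclusion_set_complete_edges_subset:
  assumes "finite V" "S \<subseteq> V" "card (V - S) < card S" "2 \<le> k"
  shows "int_matching_preclusion_set k V (complete_edges V) (complete_edges S)"
proof (rule int_matching_preclusion_set_if_deficient[where S = S and T = "V - S"])
  fix e s assume "e \<in> complete_edges V - complete_edges S" "s \<in> S" "s \<in> e"
  then show "e - {s} \<subseteq> V - S"
    by (auto simp: complete_edges_def)
qed (use assms in \<open>auto simp: simple_graph_def complete_edges_def\<close>)

section \<open>Integer matchings from pairings and triangles\<close>

text \<open>A perfect matching of the complete graph on W minus F, encoded as a fixed-point-free
  involution p of W whose pairs avoid F.\<close>
definition perfect_pairing :: "'a set \<Rightarrow> 'a set set \<Rightarrow> ('a \<Rightarrow> 'a) \<Rightarrow> bool" where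
  "perfect_pairing W F p \<longleftrightarrow> (\<forall>v\<in>W. p v \<in> W \<and> p v \<noteq> v \<and> p (p v) = v \<and> {v, p v} \<notin> F)"

definition pairing_edges :: "'a set \<Rightarrow> ('a \<Rightarrow> 'a) \<Rightarrow> 'a set set" where
  "pairing_edges W p = (\<lambda>v. {v, p v}) ` W"

lemma perfect_pairing_empty: "perfect_pairing {} F p"
  by (simp add: perfect_pairing_def)

lemma perfect_pairing_insert_pair:
  assumes "perfect_pairing W F p" "u \<notin> W" "v \<notin> W" "u \<noteq> v" "{u, v} \<notin> F"
  shows "perfect_pairing (insert u (insert v W)) F (p(u := v, v := u))"
proof -
  have "p w \<noteq> u" "p w \<noteq> v" if "w \<in> W" for w
    using assms(1-3) that by (auto simp: perfect_pairing_def)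
  with assms show ?thesis
    by (auto simp: perfect_pairing_def insert_commute)
qed

lemma pairing_edges_subset:
  assumes "perfect_pairing W F p" "W \<subseteq> V"
  shows "pairing_edges W p \<subseteq> complete_edges V - F"
  using assms by (fastforce simp: perfect_pairing_def pairing_edges_def complete_edges_def)

lemma incident_pairing_edges:
  assumes "perfect_pairing W F p"
  shows "incident (pairing_edges W p) v = (if v \<in> W then {{v, p v}} else {})"
  using assms by (auto simp: perfect_pairing_def pairing_edges_def incident_def insert_commute)

lemma perfect_int_matching_if_perfect_pairing:
  assumes "finite V" "perfect_pairing V F p"
  shows "perfect_int_matching k V (complete_edges V - F) (\<lambda>e. if e \<in> pairing_edges V p then k else 0)"
proof (rule perfect_int_matchingI)
  show G: "simple_graph V (complete_edges V - F)"
    using assms(1) by (rule simple_graph_complete_edges_Diff)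
  show "\<forall>v\<in>V. weighted_degree (complete_edges V - F) (\<lambda>e. if e \<in> pairing_edges V p then k else 0) v = k"
    using assms(2) by (simp add: weighted_degree_indicator pairing_edges_subset finite_edges[OF G]
        incident_pairing_edges)
qed

definition triangle_pairing :: "'a set \<Rightarrow> 'a set set \<Rightarrow> bool" where
  "triangle_pairing W F \<longleftrightarrow> (\<exists>a b c p. a \<in> W \<and> b \<in> W \<and> c \<in> W \<and> a \<noteq> b \<and> a \<noteq> c \<and> b \<noteq> c \<and>
     {a, b} \<notin> F \<and> {a, c} \<notin> F \<and> {b, c} \<notin> F \<and> perfect_pairing (W - {a, b, c}) F p)"

lemma almost_perfect_int_matching_if_triangle_pairing:
  assumes "finite V" "triangle_pairing V F" "odd k"
  shows "\<exists>h. almost_perfect_int_matching k V (complete_edges V - F) h"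
proof -
  obtain a b c p where abc: "a \<in> V" "b \<in> V" "c \<in> V" "a \<noteq> b" "a \<noteq> c" "b \<noteq> c"
    "{a, b} \<notin> F" "{a, c} \<notin> F" "{b, c} \<notin> F" and pp: "perfect_pairing (V - {a, b, c}) F p"
    using assms(2) unfolding triangle_pairing_def by blast
  let ?E = "complete_edges V - F"
  let ?P = "pairing_edges (V - {a, b, c}) p"
  define h where "h e = (if e \<in> {{a, b}, {a, c}} then (k - 1) div 2 else 0) +
    (if e \<in> {{b, c}} then (k + 1) div 2 else 0) + (if e \<in> ?P then k else 0)" for e
  have G: "simple_graph V ?E"
    using assms(1) by (rule simple_graph_complete_edges_Diff)
  have sub: "{{a, b}, {a, c}} \<subseteq> ?E" "{{b, c}} \<subseteq> ?E" "?P \<subseteq> ?E"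
    using abc pairing_edges_subset[OF pp] by (auto intro: doubleton_in_complete_edges)
  have deg: "weighted_degree ?E h v = (k - 1) div 2 * card (incident {{a, b}, {a, c}} v) +
      (k + 1) div 2 * card (incident {{b, c}} v) + k * card (incident ?P v)" for v
    unfolding h_def sum.distrib
    by (simp only: weighted_degree_indicator[OF _ finite_edges[OF G]] sub)
  have half: "(k - 1) div 2 * 2 = k - 1" "(k - 1) div 2 + (k + 1) div 2 = k"
    using assms(3) by (auto elim!: oddE)
  have "almost_perfect_int_matching k V ?E h"
  proof (rule almost_perfect_int_matchingI[OF G abc(1)])
    show "1 \<le> k"
      using assms(3) by (simp add: odd_pos Suc_leI)
    show "weighted_degree ?E h a = k - 1"
      using abc half by (simp add: deg incident_pairing_edges[OF pp] doubleton_eq_iff)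
    show "\<forall>v\<in>V - {a}. weighted_degree ?E h v = k"
    proof
      fix v assume "v \<in> V - {a}"
      then consider "v = b" | "v = c" | "v \<in> V - {a, b, c}" by blast
      then show "weighted_degree ?E h v = k"
        by cases (use abc half in \<open>simp_all add: deg incident_pairing_edges[OF pp] doubleton_eq_iff\<close>)
    qed
  qed
  then show ?thesis by blast
qed

section \<open>Pairings avoiding few edges\<close>

lemma exists_non_F_neighbour:
  assumes "finite W" "x \<in> W" "card (F \<inter> complete_edges W) + 2 \<le> card W"
  obtains y where "y \<in> W" "y \<noteq> x" "{x, y} \<notin> F"
proof -
  have "card (W - {x}) \<le> card (F \<inter> complete_edges W)"
    if "\<forall>y\<in>W - {x}. {x, y} \<in> F"
  proof (rule card_inj_on_le)
    show "inj_on (\<lambda>y. {x, y}) (W - {x})"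
      by (auto simp: inj_on_def doubleton_eq_iff)
    show "(\<lambda>y. {x, y}) ` (W - {x}) \<subseteq> F \<inter> complete_edges W"
      using that assms(2) by (auto intro: doubleton_in_complete_edges)
    show "finite (F \<inter> complete_edges W)"
      using finite_complete_edges[OF assms(1)] by simp
  qed
  with assms that show thesis by fastforce
qed

lemma card_edges_within_Diff_pair_le:
  assumes "finite W" "S \<subseteq> F \<inter> complete_edges W" "\<forall>e\<in>S. u \<in> e \<or> v \<in> e"
  shows "card (F \<inter> complete_edges (W - {u, v})) + card S \<le> card (F \<inter> complete_edges W)"
proof -
  have fin: "finite (F \<inter> complete_edges W)"
    using finite_complete_edges[OF assms(1)] by simp
  have "F \<inter> complete_edges (W - {u, v}) \<subseteq> (F \<inter> complete_edges W) - S"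
    using assms(3) complete_edges_mono[of "W - {u, v}" W] by (auto simp: complete_edges_def)
  then have "card (F \<inter> complete_edges (W - {u, v})) \<le> card (F \<inter> complete_edges W) - card S"
    using fin assms(2) by (metis card_Diff_subset card_mono finite_Diff finite_subset)
  moreover have "card S \<le> card (F \<inter> complete_edges W)"
    using fin assms(2) by (rule card_mono)
  ultimately show ?thesis by linarith
qed

lemma card_pairwise_disjoint_edges_le:
  assumes "finite W" "M \<subseteq> complete_edges W" "pairwise disjnt M"
  shows "2 * card M \<le> card W"
proof -
  have "(\<Sum>e\<in>M. card e) = (\<Sum>e\<in>M. 2)"
    using assms(2) card_of_complete_edge by (intro sum.cong) auto
  then have "2 * card M = (\<Sum>e\<in>M. card e)"
    by simp
  also have "\<dots> = card (\<Union>M)"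
  proof (rule card_Union_disjoint[symmetric])
    show "pairwise disjnt M" by (fact assms(3))
    show "\<And>e. e \<in> M \<Longrightarrow> finite e"
      using assms(2) card_of_complete_edge by (metis card.infinite subsetD zero_neq_numeral)
  qed
  also have "\<dots> \<le> card W"
    using assms(1,2) complete_edges_subset_Pow by (intro card_mono) auto
  finally show ?thesis .
qed

lemma removable_pair_at:
  assumes fin: "finite W" and "x \<in> W" and slack: "card (F \<inter> complete_edges W) + 2 \<le> card W"
    and "S \<subseteq> F \<inter> complete_edges W" "\<forall>e\<in>S. x \<in> e"
  obtains y where "y \<in> W" "y \<noteq> x" "{x, y} \<notin> F"
    "card (F \<inter> complete_edges (W - {x, y})) + card S \<le> card (F \<inter> complete_edges W)"
proof -
  obtain y where "y \<in> W" "y \<noteq> x" "{x, y} \<notin> F"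
    using exists_non_F_neighbour[OF fin \<open>x \<in> W\<close> slack] .
  moreover have "card (F \<inter> complete_edges (W - {x, y})) + card S \<le> card (F \<inter> complete_edges W)"
    using assms(4,5) by (intro card_edges_within_Diff_pair_le[OF fin]) auto
  ultimately show thesis
    by (rule that)
qed

lemma removable_pair_across_disjoint_edges:
  assumes fin: "finite W" and e1: "e1 \<in> F \<inter> complete_edges W" "a \<in> e1"
    and e2: "e2 \<in> F \<inter> complete_edges W" "a \<notin> e2"
    and disjoint: "\<And>x e e'. e \<in> F \<inter> complete_edges W \<Longrightarrow> e' \<in> F \<inter> complete_edges W \<Longrightarrow>
      x \<in> e \<Longrightarrow> x \<in> e' \<Longrightarrow> e = e'"
  obtains c where "c \<in> W" "a \<noteq> c" "{a, c} \<notin> F"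
    "card (F \<inter> complete_edges (W - {a, c})) + 2 \<le> card (F \<inter> complete_edges W)"
proof -
  obtain c where c: "c \<in> e2"
    using e2(1) by (auto simp: complete_edges_def)
  have "a \<in> W" "c \<in> W"
    using e1 e2(1) c complete_edges_subset_Pow by blast+
  have "a \<noteq> c" "e1 \<noteq> e2"
    using e1(2) e2(2) c by auto
  have "{a, c} \<notin> F"
  proof
    assume "{a, c} \<in> F"
    then have "{a, c} \<in> F \<inter> complete_edges W"
      using \<open>a \<in> W\<close> \<open>c \<in> W\<close> \<open>a \<noteq> c\<close> by (simp add: doubleton_in_complete_edges)
    with e1 have "{a, c} = e1"
      by (intro disjoint[of _ _ a]) simp_all
    with disjoint[OF e1(1) e2(1), of c] c \<open>e1 \<noteq> e2\<close> show False
      by auto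
  qed
  moreover have "card (F \<inter> complete_edges (W - {a, c})) + card {e1, e2} \<le> card (F \<inter> complete_edges W)"
    using e1 e2(1) c by (intro card_edges_within_Diff_pair_le[OF fin]) auto
  ultimately show thesis
    using that \<open>c \<in> W\<close> \<open>a \<noteq> c\<close> \<open>e1 \<noteq> e2\<close> by simp
qed

lemma removable_pair:
  assumes fin: "finite W" and slack: "card (F \<inter> complete_edges W) + 2 \<le> card W"
  obtains u v where "u \<in> W" "v \<in> W" "u \<noteq> v" "{u, v} \<notin> F"
    "F \<inter> complete_edges (W - {u, v}) = {} \<or>
     card (F \<inter> complete_edges (W - {u, v})) + 2 \<le> card (F \<inter> complete_edges W)"
proof -
  let ?FW = "F \<inter> complete_edges W"
  show thesis
  proof (cases "\<exists>x\<in>W. \<forall>e\<in>?FW. x \<in> e")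
    case True
    then obtain x where x: "x \<in> W" "\<forall>e\<in>?FW. x \<in> e" by blast
    obtain y where y: "y \<in> W" "y \<noteq> x" "{x, y} \<notin> F"
      and "card (F \<inter> complete_edges (W - {x, y})) + card ?FW \<le> card ?FW"
      using removable_pair_at[OF fin x(1) slack order.refl x(2)] .
    then have "card (F \<inter> complete_edges (W - {x, y})) = 0"
      by simp
    moreover have "finite (F \<inter> complete_edges (W - {x, y}))"
      using fin by (simp add: finite_complete_edges)
    ultimately have "F \<inter> complete_edges (W - {x, y}) = {}"
      by simp
    with x y that show thesis by blast
  next
    case no_common_vertex: False
    show thesis
    proof (cases "\<exists>x e e'. e \<in> ?FW \<and> e' \<in> ?FW \<and> e \<noteq> e' \<and> x \<in> e \<and> x \<in> e'")
      case True
      then obtain x e e' where e: "e \<in> ?FW" "e' \<in> ?FW" "e \<noteq> e'" "x \<in> e" "x \<in> e'" by blast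
      then have "x \<in> W"
        using complete_edges_subset_Pow by blast
      obtain y where "y \<in> W" "y \<noteq> x" "{x, y} \<notin> F"
        and "card (F \<inter> complete_edges (W - {x, y})) + card {e, e'} \<le> card ?FW"
        using removable_pair_at[OF fin \<open>x \<in> W\<close> slack, of "{e, e'}"] e by blast
      with e \<open>x \<in> W\<close> that show thesis by simp
    next
      case disjoint: False
      obtain w where "w \<in> W"
        using slack by fastforce
      with no_common_vertex obtain e1 where e1: "e1 \<in> ?FW" by blast
      then obtain a where a: "a \<in> e1"
        by (auto simp: complete_edges_def)
      then have "a \<in> W"
        using e1 complete_edges_subset_Pow by blast
      with no_common_vertex obtain e2 where e2: "e2 \<in> ?FW" "a \<notin> e2"
        by blast
      obtain c where "c \<in> W" "a \<noteq> c" "{a, c} \<notin> F"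
        "card (F \<inter> complete_edges (W - {a, c})) + 2 \<le> card ?FW"
        using removable_pair_across_disjoint_edges[OF fin e1 a e2] disjoint by blast
      with \<open>a \<in> W\<close> that show thesis by blast
    qed
  qed
qed

lemma removable_pair_at_degree_two_vertex:
  assumes fin: "finite W" and e12: "e1 \<in> F \<inter> complete_edges W" "e2 \<in> F \<inter> complete_edges W"
      "e1 \<noteq> e2" "x \<in> e1" "x \<in> e2"
    and only_e12: "\<And>e. e \<in> F \<inter> complete_edges W \<Longrightarrow> x \<in> e \<Longrightarrow> e = e1 \<or> e = e2"
    and "4 \<le> card (F \<inter> complete_edges W)"
  obtains y where "y \<in> W" "y \<noteq> x" "{x, y} \<notin> F"
    "card (F \<inter> complete_edges (W - {x, y})) + 3 \<le> card (F \<inter> complete_edges W)"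
proof -
  let ?FW = "F \<inter> complete_edges W"
  obtain p where p: "e1 = {x, p}" "x \<in> W"
    using e12(1,4) by (auto elim: complete_edge_containing)
  obtain q where q: "e2 = {x, q}"
    using e12(2,5) by (auto elim: complete_edge_containing)
  have "card ?FW - card {e1, e2, {p, q}} \<le> card (?FW - {e1, e2, {p, q}})"
    by (rule diff_card_le_card_Diff) simp
  moreover have "card {e1, e2, {p, q}} \<le> 3"
    by (simp add: card_insert_le_m1)
  ultimately have "0 < card (?FW - {e1, e2, {p, q}})"
    using \<open>4 \<le> card ?FW\<close> by linarith
  then obtain e where e: "e \<in> ?FW" "e \<noteq> e1" "e \<noteq> e2" "e \<noteq> {p, q}"
    by (metis DiffE card_gt_0_iff ex_in_conv insertCI)
  have "\<not> e \<subseteq> {p, q}"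
  proof
    assume "e \<subseteq> {p, q}"
    moreover have "card {p, q} \<le> 2" "card e = 2"
      using e(1) card_of_complete_edge by (auto simp: card_insert_if)
    ultimately show False
      using e(4) card_seteq[of "{p, q}" e] by simp
  qed
  then obtain y where y: "y \<in> e" "y \<noteq> p" "y \<noteq> q"
    by blast
  have "x \<notin> e"
    using only_e12 e by blast
  then have "y \<in> W" "y \<noteq> x"
    using e(1) y(1) complete_edges_subset_Pow by auto
  have "{x, y} \<notin> F"
  proof
    assume "{x, y} \<in> F"
    then have "{x, y} = e1 \<or> {x, y} = e2"
      using \<open>x \<in> W\<close> \<open>y \<in> W\<close> \<open>y \<noteq> x\<close> by (intro only_e12) (simp_all add: doubleton_in_complete_edges)
    with p q y \<open>y \<noteq> x\<close> show False
      by (auto simp: doubleton_eq_iff)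
  qed
  moreover have "card (F \<inter> complete_edges (W - {x, y})) + card {e1, e2, e} \<le> card ?FW"
    using e12 e y by (intro card_edges_within_Diff_pair_le[OF fin]) auto
  ultimately show thesis
    using that \<open>y \<in> W\<close> \<open>y \<noteq> x\<close> e12(3) e(2,3) by simp
qed

text \<open>Here F cannot be a matching, and a vertex of F-degree at least 2 can be paired so that three
  edges of F disappear.\<close>
lemma removable_pair_three:
  assumes fin: "finite W" and "7 \<le> card W" and tight: "card (F \<inter> complete_edges W) + 2 = card W"
  obtains u v where "u \<in> W" "v \<in> W" "u \<noteq> v" "{u, v} \<notin> F"
    "card (F \<inter> complete_edges (W - {u, v})) + 3 \<le> card (F \<inter> complete_edges W)"
proof -
  let ?FW = "F \<inter> complete_edges W"
  have slack: "card ?FW + 2 \<le> card W"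
    using tight by simp
  show thesis
  proof (cases "\<exists>x e1 e2 e3. e1 \<in> ?FW \<and> e2 \<in> ?FW \<and> e3 \<in> ?FW \<and>
      e1 \<noteq> e2 \<and> e1 \<noteq> e3 \<and> e2 \<noteq> e3 \<and> x \<in> e1 \<and> x \<in> e2 \<and> x \<in> e3")
    case True
    then obtain x e1 e2 e3 where e: "e1 \<in> ?FW" "e2 \<in> ?FW" "e3 \<in> ?FW"
      "e1 \<noteq> e2" "e1 \<noteq> e3" "e2 \<noteq> e3" "x \<in> e1" "x \<in> e2" "x \<in> e3"
      by blast
    then have "x \<in> W"
      using complete_edges_subset_Pow by blast
    obtain y where "y \<in> W" "y \<noteq> x" "{x, y} \<notin> F"
      and "card (F \<inter> complete_edges (W - {x, y})) + card {e1, e2, e3} \<le> card ?FW"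
      using removable_pair_at[OF fin \<open>x \<in> W\<close> slack, of "{e1, e2, e3}"] e by blast
    with e \<open>x \<in> W\<close> that show thesis by simp
  next
    case no_degree3: False
    show thesis
    proof (cases "pairwise disjnt ?FW")
      case True
      have "2 * card ?FW \<le> card W"
        using fin True by (intro card_pairwise_disjoint_edges_le) auto
      with tight \<open>7 \<le> card W\<close> show thesis by simp
    next
      case False
      then obtain x e1 e2 where e12: "e1 \<in> ?FW" "e2 \<in> ?FW" "e1 \<noteq> e2" "x \<in> e1" "x \<in> e2"
        unfolding pairwise_def disjnt_def by blast
      then have "x \<in> W"
        using complete_edges_subset_Pow by blast
      have "e = e1 \<or> e = e2" if "e \<in> ?FW" "x \<in> e" for e
        using no_degree3 e12 that by blast
      moreover have "4 \<le> card ?FW"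
        using tight \<open>7 \<le> card W\<close> by simp
      ultimately obtain y where "y \<in> W" "y \<noteq> x" "{x, y} \<notin> F"
        "card (F \<inter> complete_edges (W - {x, y})) + 3 \<le> card ?FW"
        using removable_pair_at_degree_two_vertex[OF fin e12] by blast
      with \<open>x \<in> W\<close> that show thesis by blast
    qed
  qed
qed

lemma perfect_pairing_exists:
  "finite W \<Longrightarrow> even (card W) \<Longrightarrow>
    F \<inter> complete_edges W = {} \<or> card (F \<inter> complete_edges W) + 2 \<le> card W \<Longrightarrow>
    \<exists>p. perfect_pairing W F p"
proof (induction "card W" arbitrary: W rule: less_induct)
  case less
  show ?case
  proof (cases "W = {}")
    case True
    then show ?thesis
      using perfect_pairing_empty by blast
  next
    case False
    with less.prems(1) have "card W \<noteq> 0"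
      by simp
    with less.prems(2) have "2 \<le> card W"
      by presburger
    with less.prems(3) have slack: "card (F \<inter> complete_edges W) + 2 \<le> card W"
      by auto
    obtain u v where uv: "u \<in> W" "v \<in> W" "u \<noteq> v" "{u, v} \<notin> F"
      and removed: "F \<inter> complete_edges (W - {u, v}) = {} \<or>
        card (F \<inter> complete_edges (W - {u, v})) + 2 \<le> card (F \<inter> complete_edges W)"
      using removable_pair[OF less.prems(1) slack] .
    have card_rest: "card (W - {u, v}) = card W - 2"
      using less.prems(1) uv(1-3) by (subst card_Diff_subset) auto
    obtain p where "perfect_pairing (W - {u, v}) F p"
      using less.hyps[of "W - {u, v}"] less.prems(1,2) removed slack card_rest \<open>2 \<le> card W\<close>
      by fastforce
    then have "perfect_pairing (insert u (insert v (W - {u, v}))) F (p(u := v, v := u))"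
      using uv(3,4) by (intro perfect_pairing_insert_pair) auto
    moreover have "insert u (insert v (W - {u, v})) = W"
      using uv(1,2) by auto
    ultimately show ?thesis by auto
  qed
qed

lemma triangle_pairing_insert_pair:
  assumes "triangle_pairing (W - {u, v}) F" "u \<in> W" "v \<in> W" "u \<noteq> v" "{u, v} \<notin> F"
  shows "triangle_pairing W F"
proof -
  obtain a b c p where abc: "a \<in> W - {u, v}" "b \<in> W - {u, v}" "c \<in> W - {u, v}"
    "a \<noteq> b" "a \<noteq> c" "b \<noteq> c" "{a, b} \<notin> F" "{a, c} \<notin> F" "{b, c} \<notin> F"
    and pp: "perfect_pairing (W - {u, v} - {a, b, c}) F p"
    using assms(1) unfolding triangle_pairing_def by blast
  have "perfect_pairing (insert u (insert v (W - {u, v} - {a, b, c}))) F (p(u := v, v := u))"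
    using assms(4,5) by (intro perfect_pairing_insert_pair[OF pp]) auto
  moreover have "insert u (insert v (W - {u, v} - {a, b, c})) = W - {a, b, c}"
    using abc(1-3) assms(2,3) by auto
  ultimately show ?thesis
    using abc unfolding triangle_pairing_def by (metis DiffD1)
qed

lemma triangle_pairing_exists:
  "finite W \<Longrightarrow> odd (card W) \<Longrightarrow> card (F \<inter> complete_edges W) + 3 \<le> card W \<Longrightarrow>
    triangle_pairing W F"
proof (induction "card W" arbitrary: W rule: less_induct)
  case less
  show ?case
  proof (cases "card W = 3")
    case True
    then obtain a b c where abc: "W = {a, b, c}" "a \<noteq> b" "a \<noteq> c" "b \<noteq> c"
      by (auto simp: card_3_iff)
    have "card (F \<inter> complete_edges W) = 0"
      using less.prems(3) True by simp
    then have "F \<inter> complete_edges W = {}"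
      using finite_complete_edges[OF less.prems(1)] by (metis card_0_eq finite_Int)
    moreover have "{a, b} \<in> complete_edges W" "{a, c} \<in> complete_edges W" "{b, c} \<in> complete_edges W"
      using abc by (auto intro: doubleton_in_complete_edges)
    ultimately have "{a, b} \<notin> F" "{a, c} \<notin> F" "{b, c} \<notin> F"
      by blast+
    with abc perfect_pairing_empty show ?thesis
      unfolding triangle_pairing_def by (intro exI[of _ a] exI[of _ b] exI[of _ c]) auto
  next
    case False
    with less.prems(2,3) have "5 \<le> card W"
      by presburger
    then have slack: "card (F \<inter> complete_edges W) + 2 \<le> card W"
      using less.prems(3) by simp
    obtain u v where uv: "u \<in> W" "v \<in> W" "u \<noteq> v" "{u, v} \<notin> F"
      and removed: "F \<inter> complete_edges (W - {u, v}) = {} \<or>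
        card (F \<inter> complete_edges (W - {u, v})) + 2 \<le> card (F \<inter> complete_edges W)"
      using removable_pair[OF less.prems(1) slack] .
    have card_rest: "card (W - {u, v}) = card W - 2"
      using less.prems(1) uv(1-3) by (subst card_Diff_subset) auto
    have "triangle_pairing (W - {u, v}) F"
      using less.hyps[of "W - {u, v}"] less.prems removed card_rest \<open>5 \<le> card W\<close>
      by fastforce
    then show ?thesis
      using uv by (rule triangle_pairing_insert_pair)
  qed
qed

lemma triangle_pairing_exists_of_card_ge_7:
  assumes "finite W" "odd (card W)" "7 \<le> card W" "card (F \<inter> complete_edges W) + 2 \<le> card W"
  shows "triangle_pairing W F"
proof (cases "card (F \<inter> complete_edges W) + 3 \<le> card W")
  case True
  with assms(1,2) show ?thesis
    by (rule triangle_pairing_exists)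
next
  case False
  with assms(4) have tight: "card (F \<inter> complete_edges W) + 2 = card W"
    by simp
  obtain u v where uv: "u \<in> W" "v \<in> W" "u \<noteq> v" "{u, v} \<notin> F"
    and removed: "card (F \<inter> complete_edges (W - {u, v})) + 3 \<le> card (F \<inter> complete_edges W)"
    using removable_pair_three[OF assms(1,3) tight] .
  have "card (W - {u, v}) = card W - 2"
    using assms(1) uv(1-3) by (subst card_Diff_subset) auto
  then have "triangle_pairing (W - {u, v}) F"
    using assms removed tight by (intro triangle_pairing_exists) auto
  then show ?thesis
    using uv by (rule triangle_pairing_insert_pair)
qed

lemma perfect_or_almost_perfect_int_matching_exists:
  assumes fin: "finite V" and "odd k"
    and slack: "card (F \<inter> complete_edges V) + 2 \<le> card V"
    and slack_3_5: "card V \<in> {3, 5} \<Longrightarrow> card (F \<inter> complete_edges V) + 3 \<le> card V"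
  shows "(\<exists>h. perfect_int_matching k V (complete_edges V - F) h) \<or>
    (\<exists>h. almost_perfect_int_matching k V (complete_edges V - F) h)"
proof (cases "even (card V)")
  case True
  then obtain p where "perfect_pairing V F p"
    using perfect_pairing_exists[OF fin True] slack by blast
  then show ?thesis
    using perfect_int_matching_if_perfect_pairing[OF fin] by blast
next
  case False
  have "triangle_pairing V F"
  proof (cases "card V \<in> {3, 5}")
    case True
    with fin False slack_3_5 show ?thesis
      by (intro triangle_pairing_exists) auto
  next
    case not_3_5: False
    then have "card V \<noteq> 3" "card V \<noteq> 5"
      by auto
    with False slack have "7 \<le> card V"
      by presburger
    with fin False slack show ?thesis
      by (intro triangle_pairing_exists_of_card_ge_7)
  qed
  then show ?thesis
    using almost_perfect_int_matching_if_triangle_pairing[OF fin _ \<open>odd k\<close>] by blast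
qed

lemma card_int_matching_preclusion_set_ge:
  assumes "finite V" "odd k" and precl: "int_matching_preclusion_set k V (complete_edges V) F"
  shows "(if card V \<in> {3, 5} then card V - 2 else card V - 1) \<le> card F"
proof (rule ccontr)
  assume "\<not> ?thesis"
  moreover have "F \<inter> complete_edges V = F"
    using precl by (auto simp: int_matching_preclusion_set_def)
  ultimately have "(\<exists>h. perfect_int_matching k V (complete_edges V - F) h) \<or>
      (\<exists>h. almost_perfect_int_matching k V (complete_edges V - F) h)"
    using assms(1,2) by (intro perfect_or_almost_perfect_int_matching_exists) (auto split: if_splits)
  with precl show False
    by (simp add: int_matching_preclusion_set_def)
qed

lemma int_matching_preclusion_set_exists:
  assumes fin: "finite V" and "2 \<le> card V" "2 \<le> k"
  shows "\<exists>F. int_matching_preclusion_set k V (complete_edges V) F \<and>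
    card F = (if card V \<in> {3, 5} then card V - 2 else card V - 1)"
proof (cases "card V \<in> {3, 5}")
  case True
  have "(card V + 1) div 2 \<le> card V"
    using True by auto
  then obtain S where S: "S \<subseteq> V" "card S = (card V + 1) div 2" "finite S"
    by (rule obtain_subset_with_card_n)
  have "card (V - S) < card S"
    using True S fin by (auto simp: card_Diff_subset)
  then have "int_matching_preclusion_set k V (complete_edges V) (complete_edges S)"
    using int_matching_preclusion_set_complete_edges_subset[OF fin S(1) _ \<open>2 \<le> k\<close>] by blast
  moreover have "card (complete_edges S) = card V - 2"
    using True S by (auto simp: card_complete_edges choose_two)
  ultimately show ?thesis
    using True by auto
next
  case False
  obtain x where "x \<in> V"
    using \<open>2 \<le> card V\<close> by fastforce
  with fin \<open>2 \<le> k\<close> have "int_matching_preclusion_set k V (complete_edges V) {e \<in> complete_edges V. x \<in> e}"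
      "card {e \<in> complete_edges V. x \<in> e} = card V - 1"
    by (simp_all add: int_matching_preclusion_set_star_edges card_star_edges)
  with False show ?thesis
    by auto
qed

theorem mp_complete_edges:
  assumes "finite V" "2 \<le> card V" "odd k" "3 \<le> k"
  shows "mp k V (complete_edges V) = (if card V \<in> {3, 5} then card V - 2 else card V - 1)"
  unfolding mp_def
proof (rule Least_equality)
  show "\<exists>F. int_matching_preclusion_set k V (complete_edges V) F \<and>
      card F = (if card V \<in> {3, 5} then card V - 2 else card V - 1)"
    using assms by (intro int_matching_preclusion_set_exists) auto
next
  fix m
  assume "\<exists>F. int_matching_preclusion_set k V (complete_edges V) F \<and> card F = m"
  then obtain F where "int_matching_preclusion_set k V (complete_edges V) F" "card F = m"
    by blast
  with card_int_matching_preclusion_set_ge[OF assms(1,3)]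
  show "(if card V \<in> {3, 5} then card V - 2 else card V - 1) \<le> m"
    by blast
qed

theorem theorem3p7:
  fixes k n :: nat
  assumes "odd k" and "k \<ge> 3" and "n \<ge> 2"
  shows "mp k {0..<n} (complete_edges {0..<n}) = (if n \<in> {3, 5} then n - 2 else n - 1)"
proof -
  have "mp k {0..<n} (complete_edges {0..<n}) =
      (if card {0..<n} \<in> {3, 5} then card {0..<n} - 2 else card {0..<n} - 1)"
    using assms by (intro mp_complete_edges) simp_all
  then show ?thesis
    by simp
qed

end
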